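(* Let $a,q,\alpha,\beta,\gamma,\delta\in\mathbb{C}$ with $a\neq 0$ and $\gamma\notin\{0,-1,-2,\dots\}$, and set $\varepsilon=\alpha+\beta-\gamma-\delta+1$. Let $(d_n)_{n\ge0}$ be defined by $d_0=1$, $d_1=\frac{q}{a\gamma}$, and for $n\ge1$ $$d_{n+1}=\frac{(1+a)n^2+\big(\gamma+\varepsilon-1+a(\gamma+\delta-1)\big)n+q}{a(n+1)(n+\gamma)}\,d_n-\frac{(n-1+\alpha)(n-1+\beta)}{a(n+1)(n+\gamma)}\,d_{n-1},$$ so that $y(x)=\sum_{n\ge0}d_nx^n$ is the formal power-series solution at $x=0$ (exponent $0$) of Heun's equation $$y''+\Big(\frac{\gamma}{x}+\frac{\delta}{x-1}+\frac{\varepsilon}{x-a}\Big)y'+\frac{\alpha\beta x-q}{x(x-1)(x-a)}\,y=0.$$ Then $\sum_{n\ge0}d_nx^n$ converges absolutely for every $x\in\mathbb{C}$ satisfying $$\left|\frac{1+a}{a}\,x\right|+\left|\frac{1}{a}\,x^2\right|<1.$$ *)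

theory Defs
  imports "HOL-Analysis.Analysis"
begin

fun heun_coeff :: "complex \<Rightarrow> complex \<Rightarrow> complex \<Rightarrow> complex \<Rightarrow> complex \<Rightarrow> complex \<Rightarrow> nat \<Rightarrow> complex" where
  "heun_coeff a q \<alpha> \<beta> \<gamma> \<delta> 0 = 1"
| "heun_coeff a q \<alpha> \<beta> \<gamma> \<delta> (Suc 0) = q / (a * \<gamma>)"
| "heun_coeff a q \<alpha> \<beta> \<gamma> \<delta> (Suc (Suc m)) =
     (let n = of_nat (Suc m) :: complex;
          \<epsilon> = \<alpha> + \<beta> - \<gamma> - \<delta> + 1
      in ((1 + a) * n^2 + (\<gamma> + \<epsilon> - 1 + a * (\<gamma> + \<delta> - 1)) * n + q)
           / (a * (n + 1) * (n + \<gamma>)) * heun_coeff a q \<alpha> \<beta> \<gamma> \<delta> (Suc m)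
         - ((n - 1 + \<alpha>) * (n - 1 + \<beta>)) / (a * (n + 1) * (n + \<gamma>))
           * heun_coeff a q \<alpha> \<beta> \<gamma> \<delta> m)"

end

theory Submission
  imports Defs
begin

text \<open>The coefficients satisfy a three-term recurrence \<open>d(n+2) = c(n) d(n+1) + e(n) d(n)\<close>
  whose coefficients, ratios of quadratics in \<open>n\<close>, tend to \<open>C = (1+a)/a\<close> and \<open>E = -1/a\<close>.
  The hypothesis says \<open>|C| r + |E| r\<^sup>2 < 1\<close> for \<open>r = |x|\<close>, so it survives enlarging \<open>|C|, |E|\<close>
  by some \<open>\<epsilon> > 0\<close>: with \<open>p = (|C|+\<epsilon>) r\<close>, \<open>s = (|E|+\<epsilon>) r\<^sup>2\<close> we get \<open>p + s < 1\<close>, and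
  \<open>u(n) = |d(n)| r\<^sup>n\<close> eventually satisfies \<open>u(n+2) \<le> p u(n+1) + s u(n)\<close>. This forces
  \<open>u(n) = O(\<rho>\<^sup>n)\<close> for any \<open>\<rho> < 1\<close> with \<open>p \<rho> + s \<le> \<rho>\<^sup>2\<close>.\<close>

lemma tendsto_quadratic_ratio:
  fixes P2 P1 P0 Q2 Q1 Q0 :: "'a::real_normed_field"
  assumes "Q2 \<noteq> 0"
  shows "(\<lambda>k. (P2 * of_nat k ^ 2 + P1 * of_nat k + P0) / (Q2 * of_nat k ^ 2 + Q1 * of_nat k + Q0))
           \<longlonglongrightarrow> P2 / Q2"
proof -
  let ?i = "\<lambda>k. inverse (of_nat k :: 'a)"
  have "(\<lambda>k. (P2 + P1 * ?i k + P0 * ?i k ^ 2) / (Q2 + Q1 * ?i k + Q0 * ?i k ^ 2))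
          \<longlonglongrightarrow> (P2 + P1 * 0 + P0 * 0 ^ 2) / (Q2 + Q1 * 0 + Q0 * 0 ^ 2)"
    by (intro tendsto_intros lim_inverse_n) (use assms in simp)
  then have lim: "(\<lambda>k. (P2 + P1 * ?i k + P0 * ?i k ^ 2) / (Q2 + Q1 * ?i k + Q0 * ?i k ^ 2))
                    \<longlonglongrightarrow> P2 / Q2"
    by simp
  show ?thesis
  proof (rule Lim_transform_eventually[OF lim])
    show "\<forall>\<^sub>F k in sequentially.
            (P2 + P1 * ?i k + P0 * ?i k ^ 2) / (Q2 + Q1 * ?i k + Q0 * ?i k ^ 2) =
            (P2 * of_nat k ^ 2 + P1 * of_nat k + P0) / (Q2 * of_nat k ^ 2 + Q1 * of_nat k + Q0)"
      using eventually_gt_at_top[of "0::nat"]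
    proof eventually_elim
      case (elim k)
      then have k: "(of_nat k :: 'a) \<noteq> 0" by simp
      have "P2 + P1 * ?i k + P0 * ?i k ^ 2 = (P2 * of_nat k ^ 2 + P1 * of_nat k + P0) / of_nat k ^ 2"
           "Q2 + Q1 * ?i k + Q0 * ?i k ^ 2 = (Q2 * of_nat k ^ 2 + Q1 * of_nat k + Q0) / of_nat k ^ 2"
        using k by (simp_all add: field_simps power2_eq_square)
      then show ?case using k by simp
    qed
  qed
qed

lemma summable_of_two_step_contraction:
  fixes u :: "nat \<Rightarrow> real"
  assumes nonneg: "\<And>n. u n \<ge> 0" and "p \<ge> 0" "s \<ge> 0" "p + s < 1"
    and step: "\<And>n. n \<ge> N \<Longrightarrow> u (Suc (Suc n)) \<le> p * u (Suc n) + s * u n"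
  shows "summable u"
proof -
  define \<rho> where "\<rho> = sqrt ((1 + (p + s)) / 2)"
  have \<rho>_pos: "\<rho> > 0" and \<rho>_lt_1: "\<rho> < 1"
    unfolding \<rho>_def using assms(2-4) by (simp_all add: real_sqrt_less_iff)
  have \<rho>_dominates: "p * \<rho> + s \<le> \<rho>\<^sup>2"
  proof -
    have "p * \<rho> \<le> p" using \<open>p \<ge> 0\<close> \<rho>_lt_1 by (simp add: mult_left_le)
    moreover have "\<rho>\<^sup>2 = (1 + (p + s)) / 2" unfolding \<rho>_def using assms(2,3) by simp
    ultimately show ?thesis using \<open>p + s < 1\<close> by simp
  qed
  define M where "M = max (u N / \<rho> ^ N) (u (Suc N) / \<rho> ^ Suc N)"
  have "M \<ge> 0" unfolding M_def using nonneg \<rho>_pos by (simp add: le_max_iff_disj)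
  have bound: "u (N + j) \<le> M * \<rho> ^ (N + j) \<and> u (Suc (N + j)) \<le> M * \<rho> ^ Suc (N + j)" for j
  proof (induction j)
    case 0
    have "u N / \<rho> ^ N \<le> M" "u (Suc N) / \<rho> ^ Suc N \<le> M" unfolding M_def by auto
    then show ?case using \<rho>_pos by (simp add: pos_divide_le_eq)
  next
    case (Suc j)
    define k where "k = N + j"
    have IH: "u k \<le> M * \<rho> ^ k" "u (Suc k) \<le> M * \<rho> ^ Suc k" using Suc.IH unfolding k_def by auto
    have "u (Suc (Suc k)) \<le> p * u (Suc k) + s * u k" using step[of k] unfolding k_def by simp
    also have "\<dots> \<le> p * (M * \<rho> ^ Suc k) + s * (M * \<rho> ^ k)"
      using IH assms(2,3) by (intro add_mono mult_left_mono) auto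
    also have "\<dots> = M * \<rho> ^ k * (p * \<rho> + s)" by (simp add: algebra_simps)
    also have "\<dots> \<le> M * \<rho> ^ k * \<rho>\<^sup>2"
      using \<rho>_dominates \<open>M \<ge> 0\<close> \<rho>_pos by (intro mult_left_mono) auto
    also have "\<dots> = M * \<rho> ^ Suc (Suc k)" by (simp add: power2_eq_square algebra_simps)
    finally show ?case using IH unfolding k_def by simp
  qed
  have "summable (\<lambda>n. M * \<rho> ^ n)"
    using \<rho>_pos \<rho>_lt_1 by (intro summable_mult summable_geometric) auto
  moreover have "norm (u n) \<le> M * \<rho> ^ n" if "n \<ge> N" for n
    using bound[of "n - N"] that nonneg[of n] by simp
  ultimately show ?thesis by (rule summable_comparison_test')
qed

lemma summable_norm_three_term_recurrence:
  fixes d c e :: "nat \<Rightarrow> 'a::real_normed_div_algebra" and r :: real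
  assumes rec: "\<And>n. d (Suc (Suc n)) = c n * d (Suc n) + e n * d n"
    and c_lim: "c \<longlonglongrightarrow> C" and e_lim: "e \<longlonglongrightarrow> E"
    and "r \<ge> 0" and radius: "norm C * r + norm E * r\<^sup>2 < 1"
  shows "summable (\<lambda>n. norm (d n) * r ^ n)"
proof -
  define \<epsilon> where "\<epsilon> = (1 - norm C * r - norm E * r\<^sup>2) / (1 + r + r\<^sup>2)"
  have "1 + r + r\<^sup>2 > 0" using \<open>r \<ge> 0\<close> by (simp add: add_pos_nonneg)
  then have "\<epsilon> > 0" and \<epsilon>_eq: "\<epsilon> * (1 + r + r\<^sup>2) = 1 - norm C * r - norm E * r\<^sup>2"
    unfolding \<epsilon>_def using radius by simp_all
  define p where "p = (norm C + \<epsilon>) * r"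
  define s where "s = (norm E + \<epsilon>) * r\<^sup>2"
  have "p \<ge> 0" "s \<ge> 0" unfolding p_def s_def using \<open>\<epsilon> > 0\<close> \<open>r \<ge> 0\<close> by auto
  have "p + s < 1"
    using \<epsilon>_eq \<open>\<epsilon> > 0\<close> unfolding p_def s_def by (simp add: algebra_simps)
  have "\<forall>\<^sub>F n in sequentially. norm (c n) < norm C + \<epsilon>"
       "\<forall>\<^sub>F n in sequentially. norm (e n) < norm E + \<epsilon>"
    using \<open>\<epsilon> > 0\<close>
    by (auto intro: order_tendstoD(2)[OF tendsto_norm[OF c_lim]] order_tendstoD(2)[OF tendsto_norm[OF e_lim]])
  then have "\<forall>\<^sub>F n in sequentially. norm (c n) < norm C + \<epsilon> \<and> norm (e n) < norm E + \<epsilon>"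
    by (rule eventually_conj)
  then obtain N where N: "\<And>n. n \<ge> N \<Longrightarrow> norm (c n) < norm C + \<epsilon> \<and> norm (e n) < norm E + \<epsilon>"
    unfolding eventually_sequentially by blast
  define u where "u n = norm (d n) * r ^ n" for n
  have "u (Suc (Suc n)) \<le> p * u (Suc n) + s * u n" if "n \<ge> N" for n
  proof -
    have "u (Suc (Suc n)) \<le> (norm (c n) * norm (d (Suc n)) + norm (e n) * norm (d n)) * r ^ Suc (Suc n)"
      unfolding u_def rec using \<open>r \<ge> 0\<close>
      by (intro mult_right_mono) (auto intro: norm_triangle_le simp: norm_mult)
    also have "\<dots> \<le> ((norm C + \<epsilon>) * norm (d (Suc n)) + (norm E + \<epsilon>) * norm (d n)) * r ^ Suc (Suc n)"
      using N[OF that] \<open>r \<ge> 0\<close> by (intro mult_right_mono add_mono) auto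
    also have "\<dots> = p * u (Suc n) + s * u n"
      unfolding p_def s_def u_def by (simp add: algebra_simps power2_eq_square)
    finally show ?thesis .
  qed
  then show ?thesis
    using summable_of_two_step_contraction[of u p s N] \<open>p \<ge> 0\<close> \<open>s \<ge> 0\<close> \<open>p + s < 1\<close> \<open>r \<ge> 0\<close>
    unfolding u_def by simp
qed

theorem mainTheorem3:
  fixes a q \<alpha> \<beta> \<gamma> \<delta> x :: complex
  assumes "a \<noteq> 0"
    and "\<forall>k::nat. \<gamma> \<noteq> - of_nat k"
    and "norm ((1 + a) / a * x) + norm (x^2 / a) < 1"
  shows "summable (\<lambda>n. norm (heun_coeff a q \<alpha> \<beta> \<gamma> \<delta> n * x ^ n))"
proof -
  define K where "K = \<gamma> + (\<alpha> + \<beta> - \<gamma> - \<delta> + 1) - 1 + a * (\<gamma> + \<delta> - 1)"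
  define c where "c k = ((1 + a) * of_nat k ^ 2 + K * of_nat k + q)
                          / (a * (of_nat k + 1) * (of_nat k + \<gamma>))" for k :: nat
  define e where "e k = - ((of_nat k - 1 + \<alpha>) * (of_nat k - 1 + \<beta>))
                          / (a * (of_nat k + 1) * (of_nat k + \<gamma>))" for k :: nat
  have rec: "heun_coeff a q \<alpha> \<beta> \<gamma> \<delta> (Suc (Suc n)) =
               c (Suc n) * heun_coeff a q \<alpha> \<beta> \<gamma> \<delta> (Suc n) + e (Suc n) * heun_coeff a q \<alpha> \<beta> \<gamma> \<delta> n" for n
    unfolding c_def e_def K_def by (simp add: Let_def diff_divide_distrib)
  have denom: "a * (k + 1) * (k + \<gamma>) = a * k ^ 2 + a * (1 + \<gamma>) * k + a * \<gamma>" for k :: complex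
    by (simp add: algebra_simps power2_eq_square)
  have numer: "- ((k - 1 + \<alpha>) * (k - 1 + \<beta>)) = (- 1) * k ^ 2 + (2 - \<alpha> - \<beta>) * k + (1 - \<alpha>) * (\<beta> - 1)"
    for k :: complex
    by (simp add: algebra_simps power2_eq_square)
  have c_lim: "c \<longlonglongrightarrow> (1 + a) / a"
    unfolding c_def denom using assms(1) by (rule tendsto_quadratic_ratio)
  have e_lim: "e \<longlonglongrightarrow> (- 1) / a"
    unfolding e_def denom numer using assms(1) by (rule tendsto_quadratic_ratio)
  have radius: "norm ((1 + a) / a) * norm x + norm ((- 1) / a) * (norm x)\<^sup>2 < 1"
    using assms(3) by (simp add: norm_mult norm_divide norm_power)
  have "summable (\<lambda>n. norm (heun_coeff a q \<alpha> \<beta> \<gamma> \<delta> n) * norm x ^ n)"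
    using rec LIMSEQ_Suc[OF c_lim] LIMSEQ_Suc[OF e_lim] norm_ge_zero radius
    by (rule summable_norm_three_term_recurrence)
  then show ?thesis by (simp add: norm_mult norm_power)
qed

end
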